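(* $$\sum_{k=1}^\infty\frac{(35k^2-316k+43)8^k}{k\binom{4k}k}=108+\frac{15}2\pi.$$ *)

theory Defs
  imports "HOL-Analysis.Analysis"
begin

end

theory Submission
  imports Defs "HOL-Real_Asymp.Real_Asymp"
begin

(* The Beta integral gives 1/(k binom(4k,k)) = int_0^1 t^(k-1) (1-t)^(3k) dt, so the k-th term is
   int_0^1 8 (1-t)^3 c(k) x^(k-1) dt with c(k) = 35k^2 - 316k + 43 and x = 8t(1-t)^3 <= 27/32.
   The tails of the generating function of c(k) have the closed form y^N Q_N(y) / (1-y)^3 with
   Q_N quadratic, so the series equals int_0^1 8 (1-t)^3 Q_0(x) / (1-x)^3 dt up to an error that
   vanishes geometrically. Hermite reduction splits this integrand into the derivative of a
   rational function, a logarithmic derivative (contributing nothing, as x = 0 at both ends), and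
   15/2 times the derivative of the polar angle of a point that turns through pi as t runs
   over [0,1]. *)

lemma has_integral_power_mult_power:
  "((\<lambda>t::real. t ^ m * (1 - t) ^ n) has_integral (fact m * fact n / fact (m + n + 1))) {0..1}"
proof -
  have "((\<lambda>t. t powr (real (m + 1) - 1) * (1 - t) powr (real (n + 1) - 1))
          has_integral Beta (real (m + 1)) (real (n + 1))) {0..1}"
    by (intro has_integral_Beta_real) auto
  moreover have "Beta (real (m + 1)) (real (n + 1)) = fact m * fact n / fact (m + n + 1)"
    unfolding Beta_def Gamma_fact[where 'a = real, symmetric]
    by (simp add: add_ac)
  ultimately have powr_integral: "((\<lambda>t. t powr real m * (1 - t) powr real n) has_integral
                      (fact m * fact n / fact (m + n + 1))) {0..1}"
    by simp
  show ?thesis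
    by (rule has_integral_spike_finite[OF _ _ powr_integral, of "{0, 1}"]) (auto simp: powr_realpow)
qed

lemma fact_div_fact_eq_inverse_choose:
  assumes "k \<ge> 1"
  shows "fact (k - 1) * fact m / fact (k - 1 + m + 1) = 1 / (real k * real ((k + m) choose k))"
proof -
  have "fact k = real k * fact (k - 1)"
    using assms by (metis fact_nonzero fact_num_eq_if of_nat_fact not_one_le_zero)
  moreover have "k - 1 + m + 1 = k + m" using assms by simp
  moreover have "real ((k + m) choose k) = fact (k + m) / (fact k * fact m)"
    using binomial_fact[of k "k + m", where 'a = real] by simp
  ultimately show ?thesis by (simp add: field_simps)
qed

definition coef :: "real \<Rightarrow> real" where
  "coef m = 35 * m ^ 2 - 316 * m + 43"

(* tail_poly n y / (1 - y) ^ 3 = (\<Sum>i. coef (n + i + 1) * y ^ i) for \<bar>y\<bar> < 1 *)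
definition tail_poly :: "real \<Rightarrow> real \<Rightarrow> real" where
  "tail_poly n y = (35 * n ^ 2 - 246 * n - 238) + (- 70 * n ^ 2 + 562 * n + 265) * y + coef n * y ^ 2"

lemma tail_poly_step: "tail_poly n y - y * tail_poly (n + 1) y = coef (n + 1) * (1 - y) ^ 3"
  unfolding tail_poly_def coef_def by (simp add: algebra_simps power2_eq_square power3_eq_cube)

lemma coef_partial_sum:
  "(1 - y) ^ 3 * (\<Sum>j<N. coef (real j + 1) * y ^ j) = tail_poly 0 y - y ^ N * tail_poly (real N) y"
proof -
  have "(1 - y) ^ 3 * (coef (real j + 1) * y ^ j) =
        y ^ j * tail_poly (real j) y - y ^ Suc j * tail_poly (real (Suc j)) y" for j
  proof -
    have "y ^ j * tail_poly (real j) y - y ^ Suc j * tail_poly (real (Suc j)) y =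
          y ^ j * (tail_poly (real j) y - y * tail_poly (real j + 1) y)"
      by (simp add: algebra_simps)
    then show ?thesis by (simp add: tail_poly_step)
  qed
  then have "(1 - y) ^ 3 * (\<Sum>j<N. coef (real j + 1) * y ^ j) =
        (\<Sum>j<N. y ^ j * tail_poly (real j) y - y ^ Suc j * tail_poly (real (Suc j)) y)"
    by (simp add: sum_distrib_left)
  also have "\<dots> = tail_poly 0 y - y ^ N * tail_poly (real N) y"
    by (subst sum_lessThan_telescope') simp
  finally show ?thesis .
qed

definition kern :: "real \<Rightarrow> real" where
  "kern t = 8 * t * (1 - t) ^ 3"

lemma kern_le: "kern t \<le> 27 / 32"
proof -
  have "27 - 32 * kern t = (4 * t - 1) ^ 2 * ((4 * t - 5) ^ 2 + 2)"
    unfolding kern_def by (simp add: algebra_simps power2_eq_square power3_eq_cube)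
  moreover have "(4 * t - 1) ^ 2 * ((4 * t - 5) ^ 2 + 2) \<ge> 0" by simp
  ultimately show ?thesis by linarith
qed

lemma kern_nonneg: "t \<in> {0..1} \<Longrightarrow> 0 \<le> kern t"
  unfolding kern_def by simp

lemma has_integral_term:
  "((\<lambda>t. 8 * (1 - t) ^ 3 * (coef (real j + 1) * kern t ^ j)) has_integral
     (let k = j + 1 in
        (35 * real k ^ 2 - 316 * real k + 43) * 8 ^ k / (real k * real ((4 * k) choose k))))
   {0..1}"
proof -
  have "(\<lambda>t. 8 * (1 - t) ^ 3 * (coef (real j + 1) * kern t ^ j)) =
        (\<lambda>t. coef (real (j + 1)) * 8 ^ (j + 1) * (t ^ j * (1 - t) ^ (3 * (j + 1))))"
    unfolding kern_def by (simp add: power_mult_distrib power_add power_mult[symmetric] algebra_simps)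
  moreover have "(let k = j + 1 in
        (35 * real k ^ 2 - 316 * real k + 43) * 8 ^ k / (real k * real ((4 * k) choose k))) =
      coef (real (j + 1)) * 8 ^ (j + 1) * (fact j * fact (3 * (j + 1)) / fact (j + 3 * (j + 1) + 1))"
    using fact_div_fact_eq_inverse_choose[of "j + 1" "3 * (j + 1)"] by (simp add: coef_def Let_def)
  ultimately show ?thesis
    by (simp only:) (intro has_integral_mult_right has_integral_power_mult_power)
qed

definition series_integrand :: "real \<Rightarrow> real" where
  "series_integrand t = 8 * (1 - t) ^ 3 * tail_poly 0 (kern t) / (1 - kern t) ^ 3"

definition series_remainder :: "nat \<Rightarrow> real \<Rightarrow> real" where
  "series_remainder N t = 8 * (1 - t) ^ 3 * kern t ^ N * tail_poly (real N) (kern t) / (1 - kern t) ^ 3"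

lemma sum_term_integrands:
  "(\<Sum>j<N. 8 * (1 - t) ^ 3 * (coef (real j + 1) * kern t ^ j)) =
     series_integrand t - series_remainder N t"
proof -
  have "1 - kern t \<noteq> 0" using kern_le[of t] by simp
  then have "(\<Sum>j<N. coef (real j + 1) * kern t ^ j) =
             (tail_poly 0 (kern t) - kern t ^ N * tail_poly (real N) (kern t)) / (1 - kern t) ^ 3"
    using coef_partial_sum[of "kern t" N] by (simp add: field_simps)
  then show ?thesis
    unfolding series_integrand_def series_remainder_def sum_distrib_left[symmetric]
    by (simp add: diff_divide_distrib right_diff_distrib mult.assoc)
qed

lemma abs_quadratic_le:
  fixes a b c y :: real
  assumes "\<bar>y\<bar> \<le> 1"
  shows "\<bar>a + b * y + c * y ^ 2\<bar> \<le> \<bar>a\<bar> + \<bar>b\<bar> + \<bar>c\<bar>"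
proof -
  have "y ^ 2 \<le> 1" using assms by (simp add: abs_square_le_1)
  then have "\<bar>b * y\<bar> \<le> \<bar>b\<bar>" "\<bar>c * y ^ 2\<bar> \<le> \<bar>c\<bar>"
    using assms by (auto simp: abs_mult power_abs intro!: mult_left_le)
  then show ?thesis by linarith
qed

definition series_remainder_bound :: "nat \<Rightarrow> real" where
  "series_remainder_bound N = 8 * (32 / 5) ^ 3 * (27 / 32) ^ N *
     (\<bar>35 * real N ^ 2 - 246 * real N - 238\<bar> + \<bar>- 70 * real N ^ 2 + 562 * real N + 265\<bar>
      + \<bar>coef N\<bar>)"

lemma abs_series_remainder_le:
  assumes "t \<in> {0..1}"
  shows "\<bar>series_remainder N t\<bar> \<le> series_remainder_bound N"
proof -
  let ?C = "\<bar>35 * real N ^ 2 - 246 * real N - 238\<bar> + \<bar>- 70 * real N ^ 2 + 562 * real N + 265\<bar>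
            + \<bar>coef N\<bar>"
  have x: "0 \<le> kern t" "kern t \<le> 27 / 32" using kern_nonneg[OF assms] kern_le by auto
  have "\<bar>8 * (1 - t) ^ 3\<bar> \<le> 8" using assms by (simp add: power_le_one)
  moreover have "\<bar>kern t ^ N\<bar> \<le> (27 / 32) ^ N" using x by (simp add: power_mono)
  moreover have "\<bar>tail_poly (real N) (kern t)\<bar> \<le> ?C"
    unfolding tail_poly_def using x by (intro abs_quadratic_le) auto
  moreover have "\<bar>1 / (1 - kern t) ^ 3\<bar> \<le> (32 / 5) ^ 3"
  proof -
    have "1 / (1 - kern t) ^ 3 \<le> 1 / (5 / 32) ^ 3"
      using x by (intro divide_left_mono power_mono mult_pos_pos) auto
    then show ?thesis using x by (simp add: power_divide)
  qed
  ultimately have "\<bar>8 * (1 - t) ^ 3\<bar> * \<bar>kern t ^ N\<bar> * \<bar>tail_poly (real N) (kern t)\<bar>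
      * \<bar>1 / (1 - kern t) ^ 3\<bar> \<le> 8 * (27 / 32) ^ N * ?C * (32 / 5) ^ 3"
    by (intro mult_mono) auto
  then show ?thesis
    unfolding series_remainder_def series_remainder_bound_def
    by (simp add: abs_mult abs_divide algebra_simps)
qed

lemma series_remainder_bound_tendsto_zero: "series_remainder_bound \<longlonglongrightarrow> 0"
  unfolding series_remainder_bound_def coef_def by real_asymp

lemma has_real_derivative_arctan_divide:
  assumes "(f has_real_derivative f') (at x)" "(g has_real_derivative g') (at x)" "g x \<noteq> 0"
  shows "((\<lambda>x. arctan (f x / g x)) has_real_derivative
           (f' * g x - f x * g') / (f x ^ 2 + g x ^ 2)) (at x)"
proof -
  have "f x ^ 2 + g x ^ 2 \<noteq> 0" using assms(3) by (simp add: add_nonneg_eq_0_iff)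
  then have "inverse (1 + (f x / g x) ^ 2) = g x ^ 2 / (f x ^ 2 + g x ^ 2)"
    using assms(3) by (simp add: field_simps)
  then have "inverse (1 + (f x / g x) ^ 2) * ((f' * g x - f x * g') / (g x * g x)) =
             (f' * g x - f x * g') / (f x ^ 2 + g x ^ 2)"
    using assms(3) by (simp add: power2_eq_square)
  with DERIV_chain2[OF DERIV_arctan DERIV_divide[OF assms]] show ?thesis by simp
qed

definition rational_numer :: "real \<Rightarrow> real" where
  "rational_numer t = - 160 + 555 * t + 2517 * t ^ 2 - 14436 * t ^ 3 + 26160 * t ^ 4
                      - 23016 * t ^ 5 + 10152 * t ^ 6 - 1824 * t ^ 7"

definition rational_numer' :: "real \<Rightarrow> real" where
  "rational_numer' t = 555 + 5034 * t - 43308 * t ^ 2 + 104640 * t ^ 3 - 115080 * t ^ 4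
                      + 60912 * t ^ 5 - 12768 * t ^ 6"

lemma has_real_derivative_rational_numer:
  "(rational_numer has_real_derivative rational_numer' t) (at t)"
  unfolding rational_numer_def[abs_def] rational_numer'_def
  by (auto intro!: derivative_eq_intros simp: algebra_simps)

lemma has_real_derivative_kern: "(kern has_real_derivative 8 * (1 - t) ^ 2 * (1 - 4 * t)) (at t)"
  unfolding kern_def[abs_def]
  by (auto intro!: derivative_eq_intros simp: algebra_simps power2_eq_square power3_eq_cube)

(* Hermite reduction: divided by (1 - kern t) ^ 3 this reads
   series_integrand = (rational_numer / (1 - kern) ^ 2)' - 43/4 (ln (1 - kern))' + 15 (2t^2 - 2t + 1) / (1 - kern). *)
lemma hermite_identity:
  "8 * (1 - t) ^ 3 * tail_poly 0 (kern t) =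
     rational_numer' t * (1 - kern t) + 2 * rational_numer t * (8 * (1 - t) ^ 2 * (1 - 4 * t))
     + 43 / 4 * (8 * (1 - t) ^ 2 * (1 - 4 * t)) * (1 - kern t) ^ 2
     + 15 * (2 * t ^ 2 - 2 * t + 1) * (1 - kern t) ^ 2"
  unfolding rational_numer_def rational_numer'_def tail_poly_def coef_def kern_def
  by (simp add: algebra_simps power2_eq_square power3_eq_cube power4_eq_xxxx eval_nat_numeral)

definition rational_part :: "real \<Rightarrow> real" where
  "rational_part t = rational_numer t / (1 - kern t) ^ 2"

definition antideriv :: "(real \<Rightarrow> real) \<Rightarrow> real \<Rightarrow> real" where
  "antideriv \<theta> t = rational_part t - 43 / 4 * ln (1 - kern t) + 15 / 2 * \<theta> t"

lemma has_real_derivative_antideriv: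
  assumes "(\<theta> has_real_derivative 2 * (2 * t ^ 2 - 2 * t + 1) / (1 - kern t)) (at t)"
  shows "(antideriv \<theta> has_real_derivative series_integrand t) (at t)"
proof -
  define u k' where "u = 1 - kern t" and "k' = 8 * (1 - t) ^ 2 * (1 - 4 * t)"
  have u: "0 < u" using kern_le[of t] by (simp add: u_def)
  have "(rational_part has_real_derivative
           (rational_numer' t * u ^ 2 - rational_numer t * (2 * (- k') * u)) / (u ^ 2) ^ 2) (at t)"
    unfolding rational_part_def[abs_def] using u
    by (auto intro!: derivative_eq_intros has_real_derivative_rational_numer has_real_derivative_kern
             simp: u_def k'_def power2_eq_square)
  moreover have "((\<lambda>t. ln (1 - kern t)) has_real_derivative - k' / u) (at t)"
    using u by (auto intro!: derivative_eq_intros has_real_derivative_kern simp: u_def k'_def)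
  ultimately have deriv: "(antideriv \<theta> has_real_derivative
      (rational_numer' t * u ^ 2 - rational_numer t * (2 * (- k') * u)) / (u ^ 2) ^ 2
      - 43 / 4 * (- k' / u) + 15 / 2 * (2 * (2 * t ^ 2 - 2 * t + 1) / u)) (at t)"
    unfolding antideriv_def[abs_def] u_def by (intro DERIV_add DERIV_diff DERIV_cmult assms)
  have "(rational_numer' t * u ^ 2 - rational_numer t * (2 * (- k') * u)) / (u ^ 2) ^ 2
      - 43 / 4 * (- k' / u) + 15 / 2 * (2 * (2 * t ^ 2 - 2 * t + 1) / u)
      = (rational_numer' t * u + 2 * rational_numer t * k'
         + 43 / 4 * k' * u ^ 2 + 15 * (2 * t ^ 2 - 2 * t + 1) * u ^ 2) / u ^ 3"
    using u by (simp add: field_simps power2_eq_square power3_eq_cube)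
  also have "\<dots> = series_integrand t"
    unfolding series_integrand_def hermite_identity u_def k'_def ..
  finally show ?thesis using deriv by simp
qed

(* As t runs over [0,1] the point (1 - 2t, 6t - 4t^2 - 1) turns from angle -pi/4 to 3pi/4. No single
   arctan branch covers this, so its polar angle is taken as angle_lower on [0,1/4] and as
   angle_upper + pi/2 on [1/4,1]. *)
lemma polar_point_norm: "(6 * t - 4 * t ^ 2 - 1) ^ 2 + (1 - 2 * t) ^ 2 = 2 * (1 - kern t)"
  unfolding kern_def by (simp add: algebra_simps power2_eq_square power3_eq_cube)

definition angle_lower :: "real \<Rightarrow> real" where
  "angle_lower t = arctan ((6 * t - 4 * t ^ 2 - 1) / (1 - 2 * t))"

definition angle_upper :: "real \<Rightarrow> real" where
  "angle_upper t = arctan ((2 * t - 1) / (6 * t - 4 * t ^ 2 - 1))"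

lemma has_real_derivative_angle_lower:
  assumes "t < 1 / 2"
  shows "(angle_lower has_real_derivative 2 * (2 * t ^ 2 - 2 * t + 1) / (1 - kern t)) (at t)"
proof -
  have "(angle_lower has_real_derivative
          ((6 - 8 * t) * (1 - 2 * t) - (6 * t - 4 * t ^ 2 - 1) * (- 2)) /
          ((6 * t - 4 * t ^ 2 - 1) ^ 2 + (1 - 2 * t) ^ 2)) (at t)"
    unfolding angle_lower_def[abs_def] using assms
    by (intro has_real_derivative_arctan_divide) (auto intro!: derivative_eq_intros)
  moreover have "(6 - 8 * t) * (1 - 2 * t) - (6 * t - 4 * t ^ 2 - 1) * (- 2) =
      2 * (2 * (2 * t ^ 2 - 2 * t + 1))"
    by (simp add: algebra_simps power2_eq_square)
  ultimately show ?thesis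
    unfolding polar_point_norm by (simp only: mult_divide_mult_cancel_left_if numeral_neq_zero if_False)
qed

lemma has_real_derivative_angle_upper:
  assumes "0 < 6 * t - 4 * t ^ 2 - 1"
  shows "(angle_upper has_real_derivative 2 * (2 * t ^ 2 - 2 * t + 1) / (1 - kern t)) (at t)"
proof -
  have "(angle_upper has_real_derivative
          (2 * (6 * t - 4 * t ^ 2 - 1) - (2 * t - 1) * (6 - 8 * t)) /
          ((2 * t - 1) ^ 2 + (6 * t - 4 * t ^ 2 - 1) ^ 2)) (at t)"
    unfolding angle_upper_def[abs_def] using assms
    by (intro has_real_derivative_arctan_divide) (auto intro!: derivative_eq_intros)
  moreover have "(2 * t - 1) ^ 2 + (6 * t - 4 * t ^ 2 - 1) ^ 2 = 2 * (1 - kern t)"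
    using polar_point_norm[of t] by (simp add: power2_commute[of "2 * t"] add.commute)
  moreover have "2 * (6 * t - 4 * t ^ 2 - 1) - (2 * t - 1) * (6 - 8 * t) =
      2 * (2 * (2 * t ^ 2 - 2 * t + 1))"
    by (simp add: algebra_simps power2_eq_square)
  ultimately show ?thesis by (simp only: mult_divide_mult_cancel_left_if numeral_neq_zero if_False)
qed

lemma has_integral_series_integrand_antideriv:
  assumes "a \<le> b"
    and "\<And>t. t \<in> {a..b} \<Longrightarrow>
           (\<theta> has_real_derivative 2 * (2 * t ^ 2 - 2 * t + 1) / (1 - kern t)) (at t)"
  shows "(series_integrand has_integral antideriv \<theta> b - antideriv \<theta> a) {a..b}"
proof (rule fundamental_theorem_of_calculus[OF assms(1)])
  fix t assume "t \<in> {a..b}"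
  then have "(antideriv \<theta> has_real_derivative series_integrand t) (at t)"
    by (intro has_real_derivative_antideriv assms(2))
  then show "(antideriv \<theta> has_vector_derivative series_integrand t) (at t within {a..b})"
    by (simp add: has_real_derivative_iff_has_vector_derivative[symmetric] has_field_derivative_at_within)
qed

lemma has_integral_series_integrand: "(series_integrand has_integral 108 + 15 / 2 * pi) {0..1}"
proof -
  have "(series_integrand has_integral antideriv angle_lower (1 / 4) - antideriv angle_lower 0) {0..1 / 4}"
    by (intro has_integral_series_integrand_antideriv has_real_derivative_angle_lower) auto
  moreover have "(series_integrand has_integral antideriv angle_upper 1 - antideriv angle_upper (1 / 4)) {1 / 4..1}"
  proof (intro has_integral_series_integrand_antideriv has_real_derivative_angle_upper)
    fix t :: real assume "t \<in> {1 / 4..1}"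
    then have "0 \<le> 4 * (t - 1 / 4) * (1 - t)" by simp
    then show "0 < 6 * t - 4 * t ^ 2 - 1"
      using \<open>t \<in> {1 / 4..1}\<close> by (simp add: algebra_simps power2_eq_square)
  qed simp
  ultimately have "(series_integrand has_integral
      (antideriv angle_lower (1 / 4) - antideriv angle_lower 0) +
      (antideriv angle_upper 1 - antideriv angle_upper (1 / 4))) {0..1}"
    by (intro has_integral_combine) auto
  moreover have "(antideriv angle_lower (1 / 4) - antideriv angle_lower 0) +
      (antideriv angle_upper 1 - antideriv angle_upper (1 / 4)) = 108 + 15 / 2 * pi"
  proof -
    have "angle_lower 0 = - pi / 4" "angle_upper 1 = pi / 4"
      "angle_lower (1 / 4) - angle_upper (1 / 4) = pi / 2"
      unfolding angle_lower_def angle_upper_def using arctan_inverse[of 2]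
      by (simp_all add: arctan_minus power2_eq_square)
    moreover have "rational_part 1 - rational_part 0 = 108" "kern 0 = kern 1"
      unfolding rational_part_def rational_numer_def kern_def by simp_all
    ultimately show ?thesis unfolding antideriv_def by (simp add: algebra_simps)
  qed
  ultimately show ?thesis by simp
qed

theorem lemma2p4:
  shows "(\<lambda>n. let k = n + 1 in
            (35 * real k ^ 2 - 316 * real k + 43) * 8 ^ k / (real k * real ((4 * k) choose k)))
         sums (108 + 15 / 2 * pi)"
proof -
  define a where "a n = (let k = n + 1 in
     (35 * real k ^ 2 - 316 * real k + 43) * 8 ^ k / (real k * real ((4 * k) choose k)))" for n
  have remainder_integral:
    "(series_remainder N has_integral (108 + 15 / 2 * pi) - (\<Sum>j<N. a j)) {0..1}" for N
  proof -
    have "((\<lambda>t. series_integrand t - (\<Sum>j<N. 8 * (1 - t) ^ 3 * (coef (real j + 1) * kern t ^ j)))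
            has_integral (108 + 15 / 2 * pi) - (\<Sum>j<N. a j)) {0..1}"
      unfolding a_def
      by (intro has_integral_diff has_integral_series_integrand has_integral_sum has_integral_term) auto
    then show ?thesis by (simp add: sum_term_integrands)
  qed
  have "norm ((108 + 15 / 2 * pi) - (\<Sum>j<N. a j)) \<le> series_remainder_bound N" for N
    using has_integral_bound_real[where B = "series_remainder_bound N" and S = "{}", OF _ _ remainder_integral]
      abs_series_remainder_le
    by (simp add: series_remainder_bound_def)
  then have "(\<lambda>N. (108 + 15 / 2 * pi) - (\<Sum>j<N. a j)) \<longlonglongrightarrow> 0"
    by (intro Lim_null_comparison[OF _ series_remainder_bound_tendsto_zero]) auto
  then show ?thesis
    unfolding sums_def a_def[abs_def] by (rule Lim_transform2[OF tendsto_const])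
qed

end
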